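(* Let $L\in\mathbf{LMO}(\Sigma)$ be a language recognized by some MON-1qfa with isolated cut-point. Then its syntactic monoid $M(L)$ is an $R$-trivial block group, i.e. $M(L)\in\mathbf{BG}\cap\mathbf{R}$.
   Context: A MON-1qfa over a finite alphabet $\Sigma$ is a tuple $A=\langle\Sigma\cup\{\#\},(O_c)_{c\in\Sigma\cup\{\#\}},\pi_0,F\rangle$, where $\pi_0\in\mathbb{C}^{1\times m}$ has norm $1$, each $O_c$ is an observable (Hermitian $m\times m$ matrix) with spectral decomposition $O_c=\sum_{r\in V(O_c)} r\,P_c(r)$ into orthogonal projectors, and $F\subseteq V(O_\#)$. For $x=x_1\cdots x_n$, with $\rho_0=\pi_0^\dagger\pi_0$ and $\rho_i=\sum_{r}P_{x_i}(r)\rho_{i-1}P_{x_i}(r)$, the acceptance probability is $p_A(x)=\sum_{r\in F}\mathrm{tr}(P_\#(r)\rho_n)$. $A$ recognizes $L$ with isolated cut-point $\lambda$ if for all $x\in\Sigma^*$, $x\in L\Leftrightarrow p_A(x)>\lambda$, and there is $\delta>0$ with $|p_A(x)-\lambda|\ge\delta$ for all $x$. $\mathbf{LMO}(\Sigma)$ is the class of languages over $\Sigma$ recognized by some MON-1qfa with isolated cut-point. $M(L)$ is the syntactic monoid of $L$. $\mathbf{BG}$ is the class of finite block groups: finite monoids in which every $R$-class and every $L$-class contains at most one idempotent. $\mathbf{R}$ is the class of $R$-trivial finite monoids ($xM=yM\Rightarrow x=y$). *)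

theory Defs
  imports "Jordan_Normal_Form.Schur_Decomposition" "HOL-Algebra.Group"
begin

definition mtrace :: "complex mat \<Rightarrow> complex" where
  "mtrace A = (\<Sum>i<dim_row A. A $$ (i, i))"

definition msum :: "nat \<Rightarrow> ('b \<Rightarrow> complex mat) \<Rightarrow> 'b set \<Rightarrow> complex mat" where
  "msum n f S = mat n n (\<lambda>(i, j). \<Sum>r\<in>S. f r $$ (i, j))"

definition hermitian :: "nat \<Rightarrow> complex mat \<Rightarrow> bool" where
  "hermitian n Ob \<longleftrightarrow> Ob \<in> carrier_mat n n \<and> mat_adjoint Ob = Ob"

definition orth_projector :: "nat \<Rightarrow> complex mat \<Rightarrow> bool" where
  "orth_projector n P \<longleftrightarrow> hermitian n P \<and> P * P = P"

definition spectral_decomposition ::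
  "nat \<Rightarrow> complex mat \<Rightarrow> real set \<Rightarrow> (real \<Rightarrow> complex mat) \<Rightarrow> bool" where
  "spectral_decomposition n Ob V P \<longleftrightarrow>
     hermitian n Ob \<and> finite V \<and>
     (\<forall>r\<in>V. orth_projector n (P r) \<and> P r \<noteq> 0\<^sub>m n n) \<and>
     (\<forall>r\<in>V. \<forall>s\<in>V. r \<noteq> s \<longrightarrow> P r * P s = 0\<^sub>m n n) \<and>
     msum n P V = 1\<^sub>m n \<and>
     Ob = msum n (\<lambda>r. complex_of_real r \<cdot>\<^sub>m P r) V"

text \<open>Alphabet symbols of type 'a; the end marker # is represented by None.\<close>
record 'a mon1qfa =
  qdim :: nat
  obs :: "'a option \<Rightarrow> complex mat"
  spec :: "'a option \<Rightarrow> real set"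
  proj :: "'a option \<Rightarrow> real \<Rightarrow> complex mat"
  init :: "complex mat"
  accept :: "real set"

definition wf_mon1qfa :: "'a mon1qfa \<Rightarrow> bool" where
  "wf_mon1qfa A \<longleftrightarrow>
     init A \<in> carrier_mat 1 (qdim A) \<and>
     (\<Sum>j<qdim A. (cmod (init A $$ (0, j)))\<^sup>2) = 1 \<and>
     (\<forall>c. spectral_decomposition (qdim A) (obs A c) (spec A c) (proj A c)) \<and>
     accept A \<subseteq> spec A None"

definition meas_step :: "'a mon1qfa \<Rightarrow> 'a option \<Rightarrow> complex mat \<Rightarrow> complex mat" where
  "meas_step A c \<rho> = msum (qdim A) (\<lambda>r. proj A c r * \<rho> * proj A c r) (spec A c)"

definition init_state :: "'a mon1qfa \<Rightarrow> complex mat" where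
  "init_state A = mat_adjoint (init A) * init A"

fun run_state :: "'a mon1qfa \<Rightarrow> complex mat \<Rightarrow> 'a list \<Rightarrow> complex mat" where
  "run_state A \<rho> [] = \<rho>"
| "run_state A \<rho> (c # x) = run_state A (meas_step A (Some c) \<rho>) x"

definition acc_prob :: "'a mon1qfa \<Rightarrow> 'a list \<Rightarrow> real" where
  "acc_prob A x = Re (\<Sum>r\<in>accept A. mtrace (proj A None r * run_state A (init_state A) x))"

definition recognizes_isolated :: "'a mon1qfa \<Rightarrow> 'a list set \<Rightarrow> bool" where
  "recognizes_isolated A L \<longleftrightarrow>
     (\<exists>lam :: real. (\<forall>x. x \<in> L \<longleftrightarrow> acc_prob A x > lam) \<and>
        (\<exists>\<delta>>0. \<forall>x. \<bar>acc_prob A x - lam\<bar> \<ge> \<delta>))"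

definition LMO :: "('a::finite) list set set" where
  "LMO = {L. \<exists>A :: 'a mon1qfa. wf_mon1qfa A \<and> recognizes_isolated A L}"

definition syn_equiv :: "'a list set \<Rightarrow> 'a list \<Rightarrow> 'a list \<Rightarrow> bool" where
  "syn_equiv L u v \<longleftrightarrow> (\<forall>x y. x @ u @ y \<in> L \<longleftrightarrow> x @ v @ y \<in> L)"

definition syn_class :: "'a list set \<Rightarrow> 'a list \<Rightarrow> 'a list set" where
  "syn_class L u = {v. syn_equiv L u v}"

definition syntactic_monoid :: "'a list set \<Rightarrow> 'a list set monoid" where
  "syntactic_monoid L =
     \<lparr>partial_object.carrier = range (syn_class L),
      monoid.mult = (\<lambda>X Y. syn_class L ((SOME u. u \<in> X) @ (SOME v. v \<in> Y))),
      monoid.one = syn_class L []\<rparr>"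

definition R_equiv :: "('m, 'b) monoid_scheme \<Rightarrow> 'm \<Rightarrow> 'm \<Rightarrow> bool" where
  "R_equiv M x y \<longleftrightarrow> (\<lambda>s. x \<otimes>\<^bsub>M\<^esub> s) ` carrier M = (\<lambda>s. y \<otimes>\<^bsub>M\<^esub> s) ` carrier M"

definition L_equiv :: "('m, 'b) monoid_scheme \<Rightarrow> 'm \<Rightarrow> 'm \<Rightarrow> bool" where
  "L_equiv M x y \<longleftrightarrow> (\<lambda>s. s \<otimes>\<^bsub>M\<^esub> x) ` carrier M = (\<lambda>s. s \<otimes>\<^bsub>M\<^esub> y) ` carrier M"

definition idempotent_el :: "('m, 'b) monoid_scheme \<Rightarrow> 'm \<Rightarrow> bool" where
  "idempotent_el M e \<longleftrightarrow> e \<in> carrier M \<and> e \<otimes>\<^bsub>M\<^esub> e = e"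

definition block_group :: "('m, 'b) monoid_scheme \<Rightarrow> bool" where
  "block_group M \<longleftrightarrow> monoid M \<and> finite (carrier M) \<and>
     (\<forall>e f. idempotent_el M e \<and> idempotent_el M f \<and> R_equiv M e f \<longrightarrow> e = f) \<and>
     (\<forall>e f. idempotent_el M e \<and> idempotent_el M f \<and> L_equiv M e f \<longrightarrow> e = f)"

definition R_trivial :: "('m, 'b) monoid_scheme \<Rightarrow> bool" where
  "R_trivial M \<longleftrightarrow> monoid M \<and> finite (carrier M) \<and>
     (\<forall>x\<in>carrier M. \<forall>y\<in>carrier M. R_equiv M x y \<longrightarrow> x = y)"

end

theory Submission
  imports Defs
begin

text \<open>Each measurement step \<open>\<rho> \<mapsto> \<Sum>\<^sub>r P(r) \<rho> P(r)\<close> is an orthogonal projection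
  for the Frobenius inner product on matrices, so along a run the Frobenius norm of the state
  never increases and the loss of squared norm in a step is the squared distance the state
  moves. The norms along the powers \<open>W\<^sup>m\<close> of a word converge, hence for suitable \<open>m\<close> one more
  round of \<open>W\<close> hardly moves the state, and then neither does any word over the letters of \<open>W\<close>.
  The acceptance probability is an inner product with the state, and the cut-point is
  isolated, so sufficiently close states lead to the same verdict. This gives
  \<open>u W\<^sup>m s v \<in> L \<longleftrightarrow> u W\<^sup>m v \<in> L\<close> whenever the letters of \<open>s\<close> occur in \<open>W\<close>, and, running
  the accepting observable backwards, \<open>u s W\<^sup>m v \<in> L \<longleftrightarrow> u W\<^sup>m v \<in> L\<close>. The first makes the
  syntactic monoid \<open>R\<close>-trivial, the second leaves at most one idempotent in each \<open>L\<close>-class.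
  Finiteness of the syntactic monoid follows by rounding the reachable states, which are
  bounded, to a grid finer than the isolation gap.\<close>

lemma mult_carrier_mat_sq [simp]:
  "A \<in> carrier_mat n n \<Longrightarrow> B \<in> carrier_mat n n \<Longrightarrow> A * B \<in> carrier_mat n n"
  by (rule mult_carrier_mat)

lemma minus_carrier_mat_sq [simp]:
  "A \<in> carrier_mat n n \<Longrightarrow> B \<in> carrier_mat n n \<Longrightarrow> A - B \<in> carrier_mat n n"
  by (rule minus_carrier_mat)

lemma index_mult_mat_sq:
  assumes "A \<in> carrier_mat n n" "B \<in> carrier_mat n n" "i < n" "j < n"
  shows "(A * B) $$ (i, j) = (\<Sum>k<n. A $$ (i, k) * B $$ (k, j))"
  using assms by (simp add: scalar_prod_def lessThan_atLeast0)

lemma index_mult_mat_sq3: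
  assumes "P \<in> carrier_mat n n" "X \<in> carrier_mat n n" "Q \<in> carrier_mat n n" "i < n" "j < n"
  shows "(P * X * Q) $$ (i, j) = (\<Sum>k<n. \<Sum>l<n. P $$ (i, k) * X $$ (k, l) * Q $$ (l, j))"
proof -
  have "(P * X * Q) $$ (i, j) = (\<Sum>l<n. (P * X) $$ (i, l) * Q $$ (l, j))"
    using assms by (intro index_mult_mat_sq) auto
  also have "\<dots> = (\<Sum>l<n. \<Sum>k<n. P $$ (i, k) * X $$ (k, l) * Q $$ (l, j))"
    using assms by (intro sum.cong refl) (simp add: scalar_prod_def lessThan_atLeast0 sum_distrib_right)
  also have "\<dots> = (\<Sum>k<n. \<Sum>l<n. P $$ (i, k) * X $$ (k, l) * Q $$ (l, j))"
    by (rule sum.swap)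
  finally show ?thesis .
qed

lemma index_mat_adjoint:
  "A \<in> carrier_mat n m \<Longrightarrow> i < m \<Longrightarrow> j < n \<Longrightarrow> mat_adjoint A $$ (i, j) = cnj (A $$ (j, i))"
  by (auto simp: mat_adjoint_def mat_of_rows_def conjugate_vec_def)

lemma hermitian_index:
  assumes "hermitian n P" "i < n" "j < n"
  shows "P $$ (i, j) = cnj (P $$ (j, i))"
  using assms index_mat_adjoint[of P n n i j] by (auto simp: hermitian_def)

lemma mat_adjoint_carrier: "mat_adjoint M \<in> carrier_mat (dim_col M) (dim_row M)"
  unfolding mat_adjoint_def
  using mat_of_rows_carrier(1)[of "dim_row M" "map conjugate (cols M)"] by simp

lemma msum_carrier [simp]: "msum n f S \<in> carrier_mat n n"
  by (simp add: msum_def)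

lemma msum_dim [simp]: "dim_row (msum n f S) = n" "dim_col (msum n f S) = n"
  by (simp_all add: msum_def)

lemma index_msum [simp]: "i < n \<Longrightarrow> j < n \<Longrightarrow> msum n f S $$ (i, j) = (\<Sum>r\<in>S. f r $$ (i, j))"
  by (simp add: msum_def)

lemma msum_cong: "(\<And>r. r \<in> S \<Longrightarrow> f r = g r) \<Longrightarrow> msum n f S = msum n g S"
  unfolding msum_def by (intro cong_mat refl) (simp add: case_prod_beta)

lemma msum_single:
  assumes "finite S" "r \<in> S" "g r \<in> carrier_mat n n" "\<And>s. s \<in> S \<Longrightarrow> s \<noteq> r \<Longrightarrow> g s = 0\<^sub>m n n"
  shows "msum n g S = g r"
proof (rule eq_matI)
  fix i j assume "i < dim_row (g r)" "j < dim_col (g r)"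
  then have ij: "i < n" "j < n" using assms(3) by auto
  have "(\<Sum>s\<in>S - {r}. g s $$ (i, j)) = 0"
    using assms(4) ij by (intro sum.neutral) auto
  then show "msum n g S $$ (i, j) = g r $$ (i, j)"
    using ij assms(1,2) by (simp add: sum.remove)
qed (use assms in auto)

lemma msum_diff:
  assumes "\<And>r. r \<in> S \<Longrightarrow> F r \<in> carrier_mat n n" "\<And>r. r \<in> S \<Longrightarrow> G r \<in> carrier_mat n n"
  shows "msum n (\<lambda>r. F r - G r) S = msum n F S - msum n G S"
proof (rule eq_matI)
  fix i j assume "i < dim_row (msum n F S - msum n G S)" "j < dim_col (msum n F S - msum n G S)"
  then have ij: "i < n" "j < n" by auto
  have "(F r - G r) $$ (i, j) = F r $$ (i, j) - G r $$ (i, j)" if "r \<in> S" for r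
    using assms[OF that] ij by simp
  then show "msum n (\<lambda>r. F r - G r) S $$ (i, j) = (msum n F S - msum n G S) $$ (i, j)"
    using ij by (simp add: sum_subtractf)
qed auto

lemma mult_msum_mult:
  assumes Q: "Q \<in> carrier_mat n n" and R: "R \<in> carrier_mat n n"
    and f: "\<And>s. s \<in> S \<Longrightarrow> f s \<in> carrier_mat n n"
  shows "Q * msum n f S * R = msum n (\<lambda>s. Q * f s * R) S"
proof (rule eq_matI)
  fix i j assume "i < dim_row (msum n (\<lambda>s. Q * f s * R) S)" "j < dim_col (msum n (\<lambda>s. Q * f s * R) S)"
  then have ij: "i < n" "j < n" by auto
  have "(Q * msum n f S * R) $$ (i, j) =
        (\<Sum>k<n. \<Sum>l<n. \<Sum>s\<in>S. Q $$ (i, k) * f s $$ (k, l) * R $$ (l, j))"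
    using ij by (simp add: index_mult_mat_sq3[OF Q msum_carrier R] sum_distrib_left sum_distrib_right)
  also have "\<dots> = (\<Sum>k<n. \<Sum>s\<in>S. \<Sum>l<n. Q $$ (i, k) * f s $$ (k, l) * R $$ (l, j))"
    by (intro sum.cong refl) (rule sum.swap)
  also have "\<dots> = (\<Sum>s\<in>S. \<Sum>k<n. \<Sum>l<n. Q $$ (i, k) * f s $$ (k, l) * R $$ (l, j))"
    by (rule sum.swap)
  also have "\<dots> = msum n (\<lambda>s. Q * f s * R) S $$ (i, j)"
    using ij by (simp add: index_mult_mat_sq3[OF Q f R])
  finally show "(Q * msum n f S * R) $$ (i, j) = msum n (\<lambda>s. Q * f s * R) S $$ (i, j)" .
qed (use assms in auto)

section \<open>Frobenius geometry of square matrices\<close>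

definition frob_inner :: "nat \<Rightarrow> complex mat \<Rightarrow> complex mat \<Rightarrow> complex" where
  "frob_inner n A B = (\<Sum>i<n. \<Sum>j<n. cnj (A $$ (i, j)) * B $$ (i, j))"

definition frob_sq :: "nat \<Rightarrow> complex mat \<Rightarrow> real" where
  "frob_sq n A = (\<Sum>i<n. \<Sum>j<n. (cmod (A $$ (i, j)))\<^sup>2)"

definition entry_norm_sum :: "nat \<Rightarrow> complex mat \<Rightarrow> real" where
  "entry_norm_sum n A = (\<Sum>i<n. \<Sum>j<n. cmod (A $$ (i, j)))"

lemma frob_sq_nonneg: "frob_sq n A \<ge> 0"
  unfolding frob_sq_def by (intro sum_nonneg) auto

lemma entry_norm_sum_nonneg: "entry_norm_sum n A \<ge> 0"
  unfolding entry_norm_sum_def by (intro sum_nonneg) auto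

lemma norm_entry_le_sqrt_frob_sq:
  assumes "i < n" "j < n"
  shows "cmod (A $$ (i, j)) \<le> sqrt (frob_sq n A)"
proof -
  have "(cmod (A $$ (i, j)))\<^sup>2 \<le> (\<Sum>j<n. (cmod (A $$ (i, j)))\<^sup>2)"
    using assms by (intro member_le_sum) auto
  also have "\<dots> \<le> frob_sq n A"
    unfolding frob_sq_def using assms
    by (intro member_le_sum[where f = "\<lambda>i. \<Sum>j<n. (cmod (A $$ (i, j)))\<^sup>2"] sum_nonneg) auto
  finally show ?thesis by (metis norm_ge_zero real_le_rsqrt)
qed

lemma frob_sq_self_diff: "X \<in> carrier_mat n n \<Longrightarrow> frob_sq n (X - X) = 0"
  unfolding frob_sq_def by (intro sum.neutral ballI) auto

lemma frob_sq_diff_commute: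
  "X \<in> carrier_mat n n \<Longrightarrow> Y \<in> carrier_mat n n \<Longrightarrow> frob_sq n (X - Y) = frob_sq n (Y - X)"
  unfolding frob_sq_def by (intro sum.cong refl) (auto simp: norm_minus_commute)

lemma frob_sq_add:
  assumes "\<And>i j. i < n \<Longrightarrow> j < n \<Longrightarrow> X $$ (i, j) = Y $$ (i, j) + Z $$ (i, j)"
  shows "frob_sq n X = frob_sq n Y + frob_sq n Z + 2 * Re (frob_inner n Y Z)"
proof -
  have "(cmod (y + z))\<^sup>2 = (cmod y)\<^sup>2 + (cmod z)\<^sup>2 + 2 * Re (cnj y * z)" for y z :: complex
    by (simp add: cmod_power2 power2_sum algebra_simps)
  then show ?thesis
    using assms unfolding frob_sq_def frob_inner_def
    by (simp add: sum.distrib sum_distrib_left Re_sum)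
qed

lemma frob_sq_diff_triangle:
  assumes "X \<in> carrier_mat n n" "Y \<in> carrier_mat n n" "Z \<in> carrier_mat n n"
  shows "frob_sq n (X - Z) \<le> 2 * frob_sq n (X - Y) + 2 * frob_sq n (Y - Z)"
proof -
  have entry: "(cmod (x - z))\<^sup>2 \<le> 2 * (cmod (x - y))\<^sup>2 + 2 * (cmod (y - z))\<^sup>2" for x y z :: complex
  proof -
    have "cmod (x - z) \<le> cmod (x - y) + cmod (y - z)"
      using norm_triangle_ineq[of "x - y" "y - z"] by simp
    then have "(cmod (x - z))\<^sup>2 \<le> (cmod (x - y) + cmod (y - z))\<^sup>2"
      by (simp add: power_mono)
    also have "\<dots> \<le> 2 * (cmod (x - y))\<^sup>2 + 2 * (cmod (y - z))\<^sup>2"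
      by (simp add: power2_sum) (smt (verit) sum_squares_bound)
    finally show ?thesis .
  qed
  have "frob_sq n (X - Z) = (\<Sum>i<n. \<Sum>j<n. (cmod (X $$ (i, j) - Z $$ (i, j)))\<^sup>2)"
    unfolding frob_sq_def using assms by (intro sum.cong refl) auto
  also have "\<dots> \<le> (\<Sum>i<n. \<Sum>j<n. 2 * (cmod (X $$ (i, j) - Y $$ (i, j)))\<^sup>2
                                 + 2 * (cmod (Y $$ (i, j) - Z $$ (i, j)))\<^sup>2)"
    by (intro sum_mono entry)
  also have "\<dots> = 2 * frob_sq n (X - Y) + 2 * frob_sq n (Y - Z)"
    unfolding frob_sq_def using assms by (simp add: sum.distrib sum_distrib_left)
  finally show ?thesis .
qed

lemma cnj_frob_inner: "cnj (frob_inner n A B) = frob_inner n B A"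
  unfolding frob_inner_def by (simp add: mult.commute)

lemma frob_inner_diff_left:
  "B \<in> carrier_mat n n \<Longrightarrow> C \<in> carrier_mat n n \<Longrightarrow>
   frob_inner n (B - C) X = frob_inner n B X - frob_inner n C X"
  unfolding frob_inner_def by (simp add: sum_subtractf left_diff_distrib)

lemma frob_inner_diff_right:
  "B \<in> carrier_mat n n \<Longrightarrow> C \<in> carrier_mat n n \<Longrightarrow>
   frob_inner n A (B - C) = frob_inner n A B - frob_inner n A C"
  unfolding frob_inner_def by (simp add: sum_subtractf right_diff_distrib)

lemma norm_frob_inner_le: "cmod (frob_inner n A B) \<le> entry_norm_sum n A * sqrt (frob_sq n B)"
proof -
  have "cmod (frob_inner n A B) \<le> (\<Sum>i<n. \<Sum>j<n. cmod (A $$ (i, j)) * cmod (B $$ (i, j)))"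
    unfolding frob_inner_def
    by (rule order_trans[OF norm_sum sum_mono], rule order_trans[OF norm_sum sum_mono])
       (simp add: norm_mult)
  also have "\<dots> \<le> (\<Sum>i<n. \<Sum>j<n. cmod (A $$ (i, j)) * sqrt (frob_sq n B))"
    by (intro sum_mono mult_left_mono norm_entry_le_sqrt_frob_sq) auto
  finally show ?thesis by (simp add: entry_norm_sum_def sum_distrib_right)
qed

lemma norm_frob_inner_le': "cmod (frob_inner n A B) \<le> sqrt (frob_sq n A) * entry_norm_sum n B"
  using norm_frob_inner_le[of n B A] by (metis cnj_frob_inner complex_mod_cnj mult.commute)

lemma frob_inner_sandwich:
  assumes "hermitian n P" "B \<in> carrier_mat n n" "X \<in> carrier_mat n n"
  shows "frob_inner n B (P * X * P) = frob_inner n (P * B * P) X"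
proof -
  have P: "P \<in> carrier_mat n n" using assms(1) by (simp add: hermitian_def)
  let ?p = "\<lambda>i k. P $$ (i, k)" and ?b = "\<lambda>i j. B $$ (i, j)" and ?x = "\<lambda>k l. X $$ (k, l)"
  have "frob_inner n B (P * X * P) =
        (\<Sum>i<n. \<Sum>j<n. \<Sum>k<n. \<Sum>l<n. cnj (?b i j) * (?p i k * ?x k l * ?p l j))"
    unfolding frob_inner_def
    by (intro sum.cong refl)
       (simp only: lessThan_iff index_mult_mat_sq3[OF P assms(3) P] sum_distrib_left)
  also have "\<dots> = (\<Sum>i<n. \<Sum>k<n. \<Sum>j<n. \<Sum>l<n. cnj (?b i j) * (?p i k * ?x k l * ?p l j))"
    by (rule sum.cong[OF refl], rule sum.swap)
  also have "\<dots> = (\<Sum>k<n. \<Sum>i<n. \<Sum>j<n. \<Sum>l<n. cnj (?b i j) * (?p i k * ?x k l * ?p l j))"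
    by (rule sum.swap)
  also have "\<dots> = (\<Sum>k<n. \<Sum>i<n. \<Sum>l<n. \<Sum>j<n. cnj (?b i j) * (?p i k * ?x k l * ?p l j))"
    by (rule sum.cong[OF refl], rule sum.cong[OF refl], rule sum.swap)
  also have "\<dots> = (\<Sum>k<n. \<Sum>l<n. \<Sum>i<n. \<Sum>j<n. cnj (?b i j) * (?p i k * ?x k l * ?p l j))"
    by (rule sum.cong[OF refl], rule sum.swap)
  also have "\<dots> = (\<Sum>k<n. \<Sum>l<n. \<Sum>i<n. \<Sum>j<n. cnj (?p k i * ?b i j * ?p j l) * ?x k l)"
  proof (intro sum.cong refl)
    fix k l i j assume "k \<in> {..<n}" "l \<in> {..<n}" "i \<in> {..<n}" "j \<in> {..<n}"
    then have "?p i k = cnj (?p k i)" "?p l j = cnj (?p j l)"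
      using hermitian_index[OF assms(1), of i k] hermitian_index[OF assms(1), of l j] by simp_all
    then show "cnj (?b i j) * (?p i k * ?x k l * ?p l j) = cnj (?p k i * ?b i j * ?p j l) * ?x k l"
      by (simp add: mult_ac)
  qed
  also have "\<dots> = frob_inner n (P * B * P) X"
    unfolding frob_inner_def
    by (intro sum.cong refl)
       (simp only: lessThan_iff index_mult_mat_sq3[OF P assms(2) P] cnj_sum sum_distrib_right)
  finally show ?thesis .
qed

lemma trace_mult_eq_frob_inner:
  assumes "hermitian n P" "R \<in> carrier_mat n n"
  shows "mtrace (P * R) = frob_inner n P R"
proof -
  have P: "P \<in> carrier_mat n n" using assms(1) by (simp add: hermitian_def)
  have "mtrace (P * R) = (\<Sum>i<n. \<Sum>k<n. P $$ (i, k) * R $$ (k, i))"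
    unfolding mtrace_def using P assms(2) by (simp add: scalar_prod_def lessThan_atLeast0)
  also have "\<dots> = (\<Sum>k<n. \<Sum>i<n. P $$ (i, k) * R $$ (k, i))"
    by (rule sum.swap)
  also have "\<dots> = frob_inner n P R"
    unfolding frob_inner_def
  proof (intro sum.cong refl)
    fix k i assume "k \<in> {..<n}" "i \<in> {..<n}"
    then show "P $$ (i, k) * R $$ (k, i) = cnj (P $$ (k, i)) * R $$ (k, i)"
      using hermitian_index[OF assms(1), of i k] by simp
  qed
  finally show ?thesis .
qed

lemma frob_inner_msum_left: "frob_inner n (msum n f S) X = (\<Sum>r\<in>S. frob_inner n (f r) X)"
proof -
  have "frob_inner n (msum n f S) X = (\<Sum>i<n. \<Sum>j<n. \<Sum>r\<in>S. cnj (f r $$ (i, j)) * X $$ (i, j))"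
    unfolding frob_inner_def by (simp add: sum_distrib_right)
  also have "\<dots> = (\<Sum>i<n. \<Sum>r\<in>S. \<Sum>j<n. cnj (f r $$ (i, j)) * X $$ (i, j))"
    by (intro sum.cong refl) (rule sum.swap)
  also have "\<dots> = (\<Sum>r\<in>S. frob_inner n (f r) X)"
    unfolding frob_inner_def by (rule sum.swap)
  finally show ?thesis .
qed

lemma frob_inner_msum_right: "frob_inner n B (msum n f S) = (\<Sum>r\<in>S. frob_inner n B (f r))"
  using arg_cong[OF frob_inner_msum_left[of n f S B], of cnj] by (simp add: cnj_frob_inner)

section \<open>Pinching by a family of orthogonal projectors\<close>

locale orthogonal_projectors =
  fixes n :: nat and V :: "real set" and P :: "real \<Rightarrow> complex mat"
  assumes finite_V: "finite V"
    and hermitian: "r \<in> V \<Longrightarrow> hermitian n (P r)"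
    and idempotent: "r \<in> V \<Longrightarrow> P r * P r = P r"
    and orthogonal: "r \<in> V \<Longrightarrow> s \<in> V \<Longrightarrow> r \<noteq> s \<Longrightarrow> P r * P s = 0\<^sub>m n n"
begin

lemma carrier: "r \<in> V \<Longrightarrow> P r \<in> carrier_mat n n"
  using hermitian by (simp add: hermitian_def)

definition pinch :: "complex mat \<Rightarrow> complex mat" where
  "pinch X = msum n (\<lambda>r. P r * X * P r) V"

lemma pinch_carrier [simp]: "pinch X \<in> carrier_mat n n"
  by (simp add: pinch_def)

lemma frob_inner_pinch:
  "B \<in> carrier_mat n n \<Longrightarrow> X \<in> carrier_mat n n \<Longrightarrow> frob_inner n B (pinch X) = frob_inner n (pinch B) X"
  unfolding pinch_def frob_inner_msum_left frob_inner_msum_right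
  by (intro sum.cong refl frob_inner_sandwich hermitian) auto

lemma mult_sandwich_assoc:
  assumes "r \<in> V" "s \<in> V" "X \<in> carrier_mat n n"
  shows "P r * (P s * X * P s) * P r = (P r * P s) * X * (P s * P r)"
  using carrier[OF assms(1)] carrier[OF assms(2)] assms(3)
  by (simp add: assoc_mult_mat[of _ n n _ n _ n])

lemma pinch_pinch:
  assumes X: "X \<in> carrier_mat n n"
  shows "pinch (pinch X) = pinch X"
proof -
  have "msum n (\<lambda>s. P r * (P s * X * P s) * P r) V = P r * X * P r" if r: "r \<in> V" for r
  proof -
    have "msum n (\<lambda>s. P r * (P s * X * P s) * P r) V = P r * (P r * X * P r) * P r"
    proof (rule msum_single[OF finite_V r])
      show "P r * (P r * X * P r) * P r \<in> carrier_mat n n"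
        using carrier[OF r] X by simp
      show "P r * (P s * X * P s) * P r = 0\<^sub>m n n" if "s \<in> V" "s \<noteq> r" for s
        using mult_sandwich_assoc[OF r that(1) X] orthogonal[OF r that(1)] orthogonal[OF that(1) r]
          that(2) X
        by simp
    qed
    then show ?thesis
      using mult_sandwich_assoc[OF r r X] by (simp add: idempotent[OF r])
  qed
  then have "msum n (\<lambda>r. msum n (\<lambda>s. P r * (P s * X * P s) * P r) V) V = pinch X"
    unfolding pinch_def by (rule msum_cong)
  moreover have "pinch (pinch X) = msum n (\<lambda>r. msum n (\<lambda>s. P r * (P s * X * P s) * P r) V) V"
    unfolding pinch_def using X carrier by (intro msum_cong mult_msum_mult) auto
  ultimately show ?thesis by simp
qed

lemma pinch_diff:
  assumes "X \<in> carrier_mat n n" "Y \<in> carrier_mat n n"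
  shows "pinch (X - Y) = pinch X - pinch Y"
proof -
  have "P r * (X - Y) * P r = P r * X * P r - P r * Y * P r" if "r \<in> V" for r
  proof -
    have "P r * (X - Y) = P r * X - P r * Y"
      using carrier[OF that] assms by (rule mult_minus_distrib_mat)
    then show ?thesis
      using carrier[OF that] assms by (simp add: minus_mult_distrib_mat[of _ n n _ _ n])
  qed
  then have "pinch (X - Y) = msum n (\<lambda>r. P r * X * P r - P r * Y * P r) V"
    unfolding pinch_def by (rule msum_cong)
  also have "\<dots> = pinch X - pinch Y"
    unfolding pinch_def using assms carrier by (intro msum_diff) auto
  finally show ?thesis .
qed

lemma frob_sq_pinch_pythagoras:
  assumes X: "X \<in> carrier_mat n n"
  shows "frob_sq n X = frob_sq n (pinch X) + frob_sq n (X - pinch X)"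
proof -
  have "frob_inner n (pinch X) (X - pinch X) = frob_inner n (pinch X) X - frob_inner n (pinch (pinch X)) X"
    using X by (simp add: frob_inner_diff_right frob_inner_pinch)
  then have "frob_inner n (pinch X) (X - pinch X) = 0"
    using X by (simp add: pinch_pinch)
  moreover have "frob_sq n X = frob_sq n (pinch X) + frob_sq n (X - pinch X)
                   + 2 * Re (frob_inner n (pinch X) (X - pinch X))"
    using X by (intro frob_sq_add) (simp add: pinch_def)
  ultimately show ?thesis by simp
qed

lemma frob_sq_pinch_le: "X \<in> carrier_mat n n \<Longrightarrow> frob_sq n (pinch X) \<le> frob_sq n X"
  using frob_sq_pinch_pythagoras[of X] frob_sq_nonneg[of n "X - pinch X"] by linarith

end

locale wf_automaton =
  fixes A :: "'a mon1qfa"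
  assumes wf: "wf_mon1qfa A"
begin

abbreviation N :: nat where "N \<equiv> qdim A"

abbreviation run :: "complex mat \<Rightarrow> 'a list \<Rightarrow> complex mat" where "run \<equiv> run_state A"

definition acc_obs :: "complex mat" where
  "acc_obs = msum N (proj A None) (accept A)"

lemma orthogonal_projectors: "orthogonal_projectors N (spec A c) (proj A c)"
proof -
  have "spectral_decomposition N (obs A c) (spec A c) (proj A c)"
    using wf by (simp add: wf_mon1qfa_def)
  then show ?thesis
    unfolding spectral_decomposition_def orth_projector_def by unfold_locales auto
qed

lemma meas_step_eq_pinch: "meas_step A c X = orthogonal_projectors.pinch N (spec A c) (proj A c) X"
  by (simp add: meas_step_def orthogonal_projectors.pinch_def[OF orthogonal_projectors])

lemma meas_step_carrier [simp]: "meas_step A c X \<in> carrier_mat N N"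
  by (simp add: meas_step_def)

lemma meas_step_diff:
  "X \<in> carrier_mat N N \<Longrightarrow> Y \<in> carrier_mat N N \<Longrightarrow>
   meas_step A c (X - Y) = meas_step A c X - meas_step A c Y"
  unfolding meas_step_eq_pinch by (rule orthogonal_projectors.pinch_diff[OF orthogonal_projectors])

lemma frob_sq_meas_step_pythagoras:
  "X \<in> carrier_mat N N \<Longrightarrow> frob_sq N X = frob_sq N (meas_step A c X) + frob_sq N (X - meas_step A c X)"
  unfolding meas_step_eq_pinch
  by (rule orthogonal_projectors.frob_sq_pinch_pythagoras[OF orthogonal_projectors])

lemma frob_sq_meas_step_le: "X \<in> carrier_mat N N \<Longrightarrow> frob_sq N (meas_step A c X) \<le> frob_sq N X"
  unfolding meas_step_eq_pinch by (rule orthogonal_projectors.frob_sq_pinch_le[OF orthogonal_projectors])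

lemma frob_inner_meas_step:
  "B \<in> carrier_mat N N \<Longrightarrow> X \<in> carrier_mat N N \<Longrightarrow>
   frob_inner N B (meas_step A c X) = frob_inner N (meas_step A c B) X"
  unfolding meas_step_eq_pinch by (rule orthogonal_projectors.frob_inner_pinch[OF orthogonal_projectors])

lemma run_carrier [simp]: "X \<in> carrier_mat N N \<Longrightarrow> run X w \<in> carrier_mat N N"
  by (induction w arbitrary: X) auto

lemma run_append: "run X (u @ v) = run (run X u) v"
  by (induction u arbitrary: X) auto

lemma run_snoc: "run X (u @ [c]) = meas_step A (Some c) (run X u)"
  by (simp add: run_append)

lemma run_diff:
  "X \<in> carrier_mat N N \<Longrightarrow> Y \<in> carrier_mat N N \<Longrightarrow> run (X - Y) w = run X w - run Y w"
  by (induction w arbitrary: X Y) (auto simp: meas_step_diff)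

lemma frob_sq_run_le: "X \<in> carrier_mat N N \<Longrightarrow> frob_sq N (run X w) \<le> frob_sq N X"
proof (induction w arbitrary: X)
  case (Cons c w)
  then show ?case
    using frob_sq_meas_step_le[of X "Some c"] by (simp, meson order_trans meas_step_carrier)
qed simp

lemma frob_inner_run:
  "B \<in> carrier_mat N N \<Longrightarrow> X \<in> carrier_mat N N \<Longrightarrow>
   frob_inner N B (run X w) = frob_inner N (run B (rev w)) X"
proof (induction w arbitrary: B X)
  case (Cons c w)
  then show ?case by (simp add: frob_inner_meas_step run_snoc)
qed simp

lemma acc_obs_carrier [simp]: "acc_obs \<in> carrier_mat N N"
  by (simp add: acc_obs_def)

lemma init_state_carrier [simp]: "init_state A \<in> carrier_mat N N"
proof -
  have "init A \<in> carrier_mat 1 N"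
    using wf by (simp add: wf_mon1qfa_def)
  then show ?thesis
    unfolding init_state_def using mat_adjoint_carrier[of "init A"] by auto
qed

lemma acc_prob_eq_frob_inner: "acc_prob A x = Re (frob_inner N acc_obs (run (init_state A) x))"
proof -
  have "hermitian N (proj A None r)" if "r \<in> accept A" for r
    using wf that orthogonal_projectors.hermitian[OF orthogonal_projectors]
    by (auto simp: wf_mon1qfa_def)
  then have "(\<Sum>r\<in>accept A. mtrace (proj A None r * run (init_state A) x)) =
             (\<Sum>r\<in>accept A. frob_inner N (proj A None r) (run (init_state A) x))"
    by (intro sum.cong refl trace_mult_eq_frob_inner) auto
  then show ?thesis
    unfolding acc_prob_def acc_obs_def frob_inner_msum_left by simp
qed

lemma acc_prob_eq_frob_inner_rev: "acc_prob A x = Re (frob_inner N (run acc_obs (rev x)) (init_state A))"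
  by (simp add: acc_prob_eq_frob_inner frob_inner_run)

end

section \<open>Stabilization along powers of a word\<close>

definition word_pow :: "'b list \<Rightarrow> nat \<Rightarrow> 'b list" where
  "word_pow W m = concat (replicate m W)"

lemma word_pow_0 [simp]: "word_pow W 0 = []"
  by (simp add: word_pow_def)

lemma word_pow_Suc: "word_pow W (Suc m) = W @ word_pow W m"
  by (simp add: word_pow_def)

lemma word_pow_Suc_right: "word_pow W (Suc m) = word_pow W m @ W"
  unfolding word_pow_def by (simp flip: replicate_append_same)

lemma rev_word_pow: "rev (word_pow W m) = word_pow (rev W) m"
proof (induction m)
  case (Suc m)
  then have "rev (word_pow W (Suc m)) = word_pow (rev W) m @ rev W"
    by (simp add: word_pow_Suc)
  then show ?case by (simp only: word_pow_Suc_right)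
qed simp

context wf_automaton
begin

lemma step_displacement_le_norm_loss:
  assumes "z \<in> carrier_mat N N" "c \<in> set w"
  shows "frob_sq N (meas_step A (Some c) z - z) \<le> 10 ^ length w * (frob_sq N z - frob_sq N (run z w))"
  using assms
proof (induction w arbitrary: z)
  case (Cons d w)
  let ?E = "meas_step A (Some c)"
  define z' where "z' = meas_step A (Some d) z"
  define a where "a = frob_sq N (z - z')"
  define loss' where "loss' = frob_sq N z' - frob_sq N (run z' w)"
  define K where "K = (10::real) ^ length w"
  have z: "z \<in> carrier_mat N N" and z': "z' \<in> carrier_mat N N"
    using Cons.prems(1) by (simp_all add: z'_def)
  have "0 \<le> a" "0 \<le> loss'" "1 \<le> K"
    using frob_sq_run_le[OF z'] by (simp_all add: a_def loss'_def K_def frob_sq_nonneg)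
  then have Ka: "a \<le> K * a" and KD: "0 \<le> K * loss'"
    by (simp_all add: mult_le_cancel_right1)
  have loss: "10 ^ length (d # w) * (frob_sq N z - frob_sq N (run z (d # w))) = 10 * K * a + 10 * K * loss'"
    using frob_sq_meas_step_pythagoras[OF z, of "Some d"]
    unfolding K_def a_def loss'_def z'_def by (simp add: algebra_simps)
  have a': "frob_sq N (z' - z) = a"
    unfolding a_def by (rule frob_sq_diff_commute[OF z' z])
  show ?case
  proof (cases "c = d")
    case True
    then have "frob_sq N (?E z - z) = a" using a' by (simp add: z'_def)
    then show ?thesis using Ka KD \<open>0 \<le> a\<close> unfolding loss by linarith
  next
    case False
    then have "c \<in> set w" using Cons.prems(2) by simp
    then have IH: "frob_sq N (?E z' - z') \<le> K * loss'"
      using Cons.IH[OF z'] unfolding K_def loss'_def by blast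
    have "frob_sq N (?E z - ?E z') \<le> a"
      unfolding a_def meas_step_diff[OF z z', symmetric] using z z' by (simp add: frob_sq_meas_step_le)
    moreover have "frob_sq N (?E z - z) \<le> 2 * frob_sq N (?E z - ?E z') + 2 * frob_sq N (?E z' - z)"
      using z z' by (intro frob_sq_diff_triangle) auto
    moreover have "frob_sq N (?E z' - z) \<le> 2 * frob_sq N (?E z' - z') + 2 * frob_sq N (z' - z)"
      using z z' by (intro frob_sq_diff_triangle) auto
    ultimately show ?thesis
      using IH a' Ka KD \<open>0 \<le> a\<close> unfolding loss by linarith
  qed
qed simp

lemma run_displacement_le_norm_loss:
  assumes z: "z \<in> carrier_mat N N" and "set s \<subseteq> set w"
  shows "frob_sq N (run z s - z) \<le> 4 ^ length s * 10 ^ length w * (frob_sq N z - frob_sq N (run z w))"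
  using assms(2)
proof (induction s rule: rev_induct)
  case Nil
  then show ?case using frob_sq_run_le[OF z] by (simp add: frob_sq_self_diff[OF z])
next
  case (snoc c s)
  let ?E = "meas_step A (Some c)"
  define loss where "loss = 10 ^ length w * (frob_sq N z - frob_sq N (run z w))"
  define F where "F = (4::real) ^ length s"
  define y where "y = run z s"
  have y: "y \<in> carrier_mat N N" unfolding y_def using z by simp
  have "0 \<le> loss" "1 \<le> F"
    using frob_sq_run_le[OF z] by (simp_all add: loss_def F_def)
  then have FX: "loss \<le> F * loss" by (simp add: mult_le_cancel_right1)
  have IH: "frob_sq N (y - z) \<le> F * loss"
    using snoc unfolding y_def F_def loss_def by (simp add: mult.assoc)
  have step: "frob_sq N (?E z - z) \<le> loss"
    unfolding loss_def using snoc.prems by (intro step_displacement_le_norm_loss[OF z]) auto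
  have "frob_sq N (?E y - ?E z) \<le> frob_sq N (y - z)"
    unfolding meas_step_diff[OF y z, symmetric] using y z by (simp add: frob_sq_meas_step_le)
  moreover have "frob_sq N (?E y - z) \<le> 2 * frob_sq N (?E y - ?E z) + 2 * frob_sq N (?E z - z)"
    using y z by (intro frob_sq_diff_triangle) auto
  ultimately have "frob_sq N (?E y - z) \<le> 4 * F * loss"
    using IH step FX by linarith
  then show ?case
    unfolding y_def F_def loss_def by (simp add: run_snoc mult.assoc)
qed

text \<open>Squared norms along \<open>y W\<^sup>m\<close> decrease and are bounded below, so some round of \<open>W\<close> loses
  almost nothing; by the previous lemma the state is then almost fixed by every word over the
  letters of \<open>W\<close>.\<close>

lemma exists_word_pow_almost_fixed:
  assumes y: "y \<in> carrier_mat N N" and "set s \<subseteq> set W" and "e > 0"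
  shows "\<exists>m. frob_sq N (run (run y (word_pow W m)) s - run y (word_pow W m)) < e"
proof -
  define K where "K = (4::real) ^ length s * 10 ^ length W"
  have K: "K > 0" unfolding K_def by simp
  have "\<exists>m. frob_sq N (run y (word_pow W m)) - frob_sq N (run y (word_pow W (Suc m))) < e / K"
  proof (rule ccontr)
    assume "\<not> ?thesis"
    then have loss: "e / K \<le> frob_sq N (run y (word_pow W m)) - frob_sq N (run y (word_pow W (Suc m)))"
      for m by (simp add: not_less)
    have bound: "frob_sq N (run y (word_pow W m)) \<le> frob_sq N y - real m * (e / K)" for m
    proof (induction m)
      case (Suc m)
      then show ?case using loss[of m] by (simp add: algebra_simps)
    qed simp
    obtain m where "frob_sq N y < real m * (e / K)"
      using reals_Archimedean3[of "e / K"] K \<open>e > 0\<close> by auto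
    then show False
      using bound[of m] frob_sq_nonneg[of N "run y (word_pow W m)"] by linarith
  qed
  then obtain m where m: "frob_sq N (run y (word_pow W m)) - frob_sq N (run y (word_pow W (Suc m))) < e / K"
    by blast
  define z where "z = run y (word_pow W m)"
  have z: "z \<in> carrier_mat N N" unfolding z_def using y by simp
  have "frob_sq N (run z s - z) \<le> K * (frob_sq N z - frob_sq N (run z W))"
    using run_displacement_le_norm_loss[OF z assms(2)] unfolding K_def by (simp add: mult.assoc)
  also have "\<dots> < K * (e / K)"
    using m K by (intro mult_strict_left_mono) (simp_all add: z_def word_pow_Suc_right run_append)
  also have "\<dots> = e" using K by simp
  finally show ?thesis unfolding z_def by blast
qed

end

section \<open>The syntactic monoid\<close>

lemma syn_equiv_refl: "syn_equiv L u u"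
  by (simp add: syn_equiv_def)

lemma syn_equiv_sym: "syn_equiv L u v \<Longrightarrow> syn_equiv L v u"
  by (simp add: syn_equiv_def)

lemma syn_equiv_trans: "syn_equiv L u v \<Longrightarrow> syn_equiv L v w \<Longrightarrow> syn_equiv L u w"
  by (simp add: syn_equiv_def)

lemma syn_equiv_append: "syn_equiv L u u' \<Longrightarrow> syn_equiv L v v' \<Longrightarrow> syn_equiv L (u @ v) (u' @ v')"
  unfolding syn_equiv_def by (metis append.assoc)

lemma syn_equivD: "syn_equiv L u u' \<Longrightarrow> x @ u @ y \<in> L \<longleftrightarrow> x @ u' @ y \<in> L"
  unfolding syn_equiv_def by blast

lemma syn_class_eq_iff: "syn_class L u = syn_class L v \<longleftrightarrow> syn_equiv L u v"
  unfolding syn_class_def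
  by (metis (mono_tags, lifting) mem_Collect_eq syn_equiv_refl syn_equiv_sym syn_equiv_trans
      Collect_cong)

lemma syn_class_mult:
  "syn_class L u \<otimes>\<^bsub>syntactic_monoid L\<^esub> syn_class L v = syn_class L (u @ v)"
proof -
  have some: "syn_equiv L w (SOME w'. w' \<in> syn_class L w)" for w
    using someI[of "\<lambda>w'. w' \<in> syn_class L w" w] by (simp add: syn_class_def syn_equiv_refl)
  show ?thesis
    unfolding syntactic_monoid_def
    using syn_equiv_append[OF syn_equiv_sym[OF some] syn_equiv_sym[OF some]]
    by (simp add: syn_class_eq_iff)
qed

lemma syn_class_one: "\<one>\<^bsub>syntactic_monoid L\<^esub> = syn_class L []"
  by (simp add: syntactic_monoid_def)

lemma carrier_syntactic_monoid: "carrier (syntactic_monoid L) = range (syn_class L)"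
  by (simp add: syntactic_monoid_def)

lemma monoid_syntactic_monoid: "monoid (syntactic_monoid L)"
  by (rule monoidI)
     (auto simp: carrier_syntactic_monoid syn_class_mult syn_class_one)

lemma R_equiv_syn_classD:
  assumes "R_equiv (syntactic_monoid L) (syn_class L a) (syn_class L b)"
  obtains c where "syn_equiv L a (b @ c)"
proof -
  let ?M = "syntactic_monoid L"
  have "syn_class L a \<in> (\<lambda>s. syn_class L a \<otimes>\<^bsub>?M\<^esub> s) ` carrier ?M"
    by (auto simp: carrier_syntactic_monoid syn_class_mult intro!: image_eqI[of _ _ "syn_class L []"])
  then have "syn_class L a \<in> (\<lambda>s. syn_class L b \<otimes>\<^bsub>?M\<^esub> s) ` carrier ?M"
    using assms by (simp add: R_equiv_def)
  then show ?thesis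
    using that by (auto simp: carrier_syntactic_monoid syn_class_mult syn_class_eq_iff)
qed

lemma L_equiv_syn_classD:
  assumes "L_equiv (syntactic_monoid L) (syn_class L a) (syn_class L b)"
  obtains c where "syn_equiv L a (c @ b)"
proof -
  let ?M = "syntactic_monoid L"
  have "syn_class L a \<in> (\<lambda>s. s \<otimes>\<^bsub>?M\<^esub> syn_class L a) ` carrier ?M"
    by (auto simp: carrier_syntactic_monoid syn_class_mult intro!: image_eqI[of _ _ "syn_class L []"])
  then have "syn_class L a \<in> (\<lambda>s. s \<otimes>\<^bsub>?M\<^esub> syn_class L b) ` carrier ?M"
    using assms by (simp add: L_equiv_def)
  then show ?thesis
    using that by (auto simp: carrier_syntactic_monoid syn_class_mult syn_class_eq_iff)
qed

lemma syn_equiv_append_word_pow: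
  assumes "syn_equiv L (a @ W) a"
  shows "syn_equiv L (a @ word_pow W m) a"
proof (induction m)
  case (Suc m)
  have "syn_equiv L ((a @ W) @ word_pow W m) (a @ word_pow W m)"
    by (rule syn_equiv_append[OF assms syn_equiv_refl])
  then show ?case
    using Suc.IH syn_equiv_trans by (fastforce simp: word_pow_Suc)
qed (simp add: syn_equiv_refl)

definition right_power_absorbing :: "'a list set \<Rightarrow> bool" where
  "right_power_absorbing L \<longleftrightarrow> (\<forall>u s W v. set s \<subseteq> set W \<longrightarrow>
     (\<exists>m. u @ word_pow W m @ s @ v \<in> L \<longleftrightarrow> u @ word_pow W m @ v \<in> L))"

definition left_power_absorbing :: "'a list set \<Rightarrow> bool" where
  "left_power_absorbing L \<longleftrightarrow> (\<forall>u s W v. set s \<subseteq> set W \<longrightarrow>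
     (\<exists>m. u @ s @ word_pow W m @ v \<in> L \<longleftrightarrow> u @ word_pow W m @ v \<in> L))"

text \<open>If \<open>a \<sim> b c\<close> and \<open>b \<sim> a d\<close> then \<open>a (d c)\<^sup>m \<sim> a\<close> for all \<open>m\<close>, and absorbing the factor \<open>d\<close>
  into a suitable power \<open>(d c)\<^sup>m\<close> gives \<open>a d \<sim> a\<close>, hence \<open>a \<sim> b\<close>.\<close>

lemma R_trivial_syntactic_monoid:
  assumes fin: "finite (carrier (syntactic_monoid L))" and absorb: "right_power_absorbing L"
  shows "R_trivial (syntactic_monoid L)"
  unfolding R_trivial_def
proof (intro conjI ballI impI monoid_syntactic_monoid fin)
  fix x y assume "x \<in> carrier (syntactic_monoid L)" "y \<in> carrier (syntactic_monoid L)"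
    and R: "R_equiv (syntactic_monoid L) x y"
  then obtain a b where ab: "x = syn_class L a" "y = syn_class L b"
    by (auto simp: carrier_syntactic_monoid)
  obtain c where c: "syn_equiv L a (b @ c)"
    using R_equiv_syn_classD R ab by metis
  obtain d where d: "syn_equiv L b (a @ d)"
    using R_equiv_syn_classD R ab by (metis R_equiv_def)
  have "syn_equiv L (b @ c) ((a @ d) @ c)"
    by (rule syn_equiv_append[OF d syn_equiv_refl])
  then have "syn_equiv L (a @ (d @ c)) a"
    using c syn_equiv_trans syn_equiv_sym by fastforce
  then have pow: "syn_equiv L (a @ word_pow (d @ c) m) a" for m
    by (rule syn_equiv_append_word_pow)
  have "syn_equiv L a (a @ d)"
    unfolding syn_equiv_def
  proof (intro allI)
    fix p q
    obtain m where "(p @ a) @ word_pow (d @ c) m @ d @ q \<in> L \<longleftrightarrow> (p @ a) @ word_pow (d @ c) m @ q \<in> L"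
      using absorb unfolding right_power_absorbing_def by (metis set_append sup_ge1)
    then show "p @ a @ q \<in> L \<longleftrightarrow> p @ (a @ d) @ q \<in> L"
      using syn_equivD[OF pow[of m], of p "d @ q"] syn_equivD[OF pow[of m], of p q] by simp
  qed
  then show "x = y"
    using ab d syn_class_eq_iff syn_equiv_sym syn_equiv_trans by metis
qed

text \<open>For \<open>L\<close>-equivalent idempotents \<open>a\<close> and \<open>b\<close> one has \<open>a b \<sim> a\<close> and \<open>b a \<sim> b\<close>, so
  \<open>b (a b)\<^sup>m \<sim> b\<close> and \<open>(a b)\<^sup>m\<^sup>+\<^sup>1 \<sim> a\<close>; absorbing the prefix \<open>b\<close> into a suitable power gives
  \<open>b \<sim> a\<close>.\<close>

lemma L_equiv_idempotents_syntactic_monoid: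
  assumes absorb: "left_power_absorbing L"
    and e: "idempotent_el (syntactic_monoid L) e" and f: "idempotent_el (syntactic_monoid L) f"
    and Leq: "L_equiv (syntactic_monoid L) e f"
  shows "e = f"
proof -
  obtain a b where ab: "e = syn_class L a" "f = syn_class L b"
    using e f by (auto simp: carrier_syntactic_monoid idempotent_el_def)
  have aa: "syn_equiv L (a @ a) a" and bb: "syn_equiv L (b @ b) b"
    using e f ab by (simp_all add: idempotent_el_def syn_class_mult syn_class_eq_iff)
  obtain c where c: "syn_equiv L a (c @ b)"
    using L_equiv_syn_classD Leq ab by metis
  obtain d where d: "syn_equiv L b (d @ a)"
    using L_equiv_syn_classD Leq ab by (metis L_equiv_def)
  have "syn_equiv L (a @ b) a"
  proof -
    have "syn_equiv L (a @ b) (c @ (b @ b))"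
      using syn_equiv_append[OF c syn_equiv_refl] by simp
    then show ?thesis
      using syn_equiv_append[OF syn_equiv_refl[of L c] bb] c syn_equiv_trans syn_equiv_sym by blast
  qed
  have "syn_equiv L (b @ a) b"
  proof -
    have "syn_equiv L (b @ a) (d @ (a @ a))"
      using syn_equiv_append[OF d syn_equiv_refl] by simp
    then show ?thesis
      using syn_equiv_append[OF syn_equiv_refl[of L d] aa] d syn_equiv_trans syn_equiv_sym by blast
  qed
  then have "syn_equiv L (b @ (a @ b)) b"
    using syn_equiv_append[OF \<open>syn_equiv L (b @ a) b\<close> syn_equiv_refl[of L b]] bb syn_equiv_trans
    by fastforce
  then have pow_b: "syn_equiv L (b @ word_pow (a @ b) m) b" for m
    by (rule syn_equiv_append_word_pow)
  have pow_a: "syn_equiv L (word_pow (a @ b) (Suc m)) a" for m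
    using syn_equiv_append[OF syn_equiv_refl[of L a] pow_b[of m]] \<open>syn_equiv L (a @ b) a\<close>
      syn_equiv_trans
    by (fastforce simp: word_pow_Suc)
  have "syn_equiv L b a"
    unfolding syn_equiv_def
  proof (intro allI)
    fix p q
    obtain m where "p @ b @ word_pow (a @ b) m @ (a @ b) @ q \<in> L \<longleftrightarrow> p @ word_pow (a @ b) m @ (a @ b) @ q \<in> L"
      using absorb unfolding left_power_absorbing_def by (metis set_append sup_ge2)
    then show "p @ b @ q \<in> L \<longleftrightarrow> p @ a @ q \<in> L"
      using syn_equivD[OF pow_b[of "Suc m"], of p q] syn_equivD[OF pow_a[of m], of p q]
      by (simp add: word_pow_Suc_right)
  qed
  then show ?thesis
    using ab syn_class_eq_iff syn_equiv_sym by metis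
qed

lemma block_group_syntactic_monoid:
  assumes "R_trivial (syntactic_monoid L)" "left_power_absorbing L"
  shows "block_group (syntactic_monoid L)"
  using assms L_equiv_idempotents_syntactic_monoid
  unfolding block_group_def R_trivial_def idempotent_el_def by blast

section \<open>Rounding matrices to a grid\<close>

definition grid_cell :: "real \<Rightarrow> nat \<Rightarrow> complex mat \<Rightarrow> nat \<times> nat \<Rightarrow> int \<times> int" where
  "grid_cell h n X =
     restrict (\<lambda>(i, j). (\<lfloor>Re (X $$ (i, j)) / h\<rfloor>, \<lfloor>Im (X $$ (i, j)) / h\<rfloor>)) ({..<n} \<times> {..<n})"

lemma frob_sq_diff_le_if_same_grid_cell:
  assumes h: "h > 0" and X: "X \<in> carrier_mat n n" and Y: "Y \<in> carrier_mat n n"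
    and cell: "grid_cell h n X = grid_cell h n Y"
  shows "frob_sq n (X - Y) \<le> 2 * h\<^sup>2 * (real n)\<^sup>2"
proof -
  have close: "(a - b)\<^sup>2 \<le> h\<^sup>2" if "\<lfloor>a / h\<rfloor> = \<lfloor>b / h\<rfloor>" for a b :: real
  proof -
    have "\<bar>a / h - b / h\<bar> < 1"
      using that by linarith
    then have "\<bar>a - b\<bar> \<le> h"
      using h by (simp add: diff_divide_distrib[symmetric] abs_divide divide_less_eq)
    then show ?thesis
      by (metis abs_ge_zero power2_abs power_mono)
  qed
  have "(cmod ((X - Y) $$ (i, j)))\<^sup>2 \<le> 2 * h\<^sup>2" if "i \<in> {..<n}" "j \<in> {..<n}" for i j
  proof -
    have "grid_cell h n X (i, j) = grid_cell h n Y (i, j)"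
      using cell by simp
    then have "(Re (X $$ (i, j)) - Re (Y $$ (i, j)))\<^sup>2 \<le> h\<^sup>2"
      and "(Im (X $$ (i, j)) - Im (Y $$ (i, j)))\<^sup>2 \<le> h\<^sup>2"
      using that by (auto simp: grid_cell_def intro!: close)
    then show ?thesis
      using that X Y by (simp add: cmod_power2)
  qed
  then have "frob_sq n (X - Y) \<le> (\<Sum>i<n. \<Sum>j<n. 2 * h\<^sup>2)"
    unfolding frob_sq_def by (intro sum_mono)
  then show ?thesis
    by (simp add: power2_eq_square mult_ac)
qed

lemma finite_grid_cells_of_bounded:
  assumes h: "h > 0"
  shows "finite (grid_cell h n ` {X. frob_sq n X \<le> B})"
proof -
  define K where "K = \<lceil>sqrt B / h\<rceil> + 1"
  have floor_bounded: "\<lfloor>t / h\<rfloor> \<in> {-K..K}" if "\<bar>t\<bar> \<le> sqrt B" for t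
  proof -
    have "\<bar>t / h\<bar> \<le> sqrt B / h"
      using that h by (simp add: abs_divide divide_right_mono)
    then show ?thesis
      unfolding K_def by (simp, linarith)
  qed
  have "grid_cell h n ` {X. frob_sq n X \<le> B} \<subseteq> PiE ({..<n} \<times> {..<n}) (\<lambda>_. {-K..K} \<times> {-K..K})"
  proof clarify
    fix X assume B: "frob_sq n X \<le> B"
    have "cmod (X $$ (i, j)) \<le> sqrt B" if "i < n" "j < n" for i j
      using norm_entry_le_sqrt_frob_sq[OF that, of X] B by (meson order_trans real_sqrt_le_mono)
    then show "grid_cell h n X \<in> PiE ({..<n} \<times> {..<n}) (\<lambda>_. {-K..K} \<times> {-K..K})"
      unfolding grid_cell_def
      by (auto intro!: floor_bounded order_trans[OF abs_Re_le_cmod] order_trans[OF abs_Im_le_cmod])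
  qed
  then show ?thesis
    by (rule finite_subset) (intro finite_PiE; simp)
qed

lemma exists_grid_width:
  fixes e c :: real
  assumes "e > 0" "c \<ge> 0"
  shows "\<exists>h>0. 2 * h\<^sup>2 * c < e"
proof (intro exI conjI)
  let ?h = "sqrt (e / (2 * (c + 1)))"
  show "?h > 0" using assms by simp
  have "2 * ?h\<^sup>2 * c = e * (c / (c + 1))"
    using assms by (simp add: field_simps)
  also have "\<dots> < e * 1"
    using assms by (intro mult_strict_left_mono) auto
  finally show "2 * ?h\<^sup>2 * c < e" by simp
qed

lemma finite_range_if_factors_through:
  assumes "finite (range g)" "\<And>x y. g x = g y \<Longrightarrow> f x = f y"
  shows "finite (range f)"
proof -
  have "f x = f (inv_into UNIV g (g x))" for x
    by (rule assms(2)) (simp add: f_inv_into_f)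
  then have "range f \<subseteq> (\<lambda>k. f (inv_into UNIV g k)) ` range g"
    by blast
  then show ?thesis
    using assms(1) by (rule finite_subset[OF _ finite_imageI])
qed

locale isolated_cut_point = wf_automaton A for A :: "'a mon1qfa" +
  fixes L :: "'a list set" and cut \<delta> :: real
  assumes mem_iff: "\<And>x. x \<in> L \<longleftrightarrow> acc_prob A x > cut"
    and gap_pos: "\<delta> > 0"
    and gap: "\<And>x. \<bar>acc_prob A x - cut\<bar> \<ge> \<delta>"
begin

lemma same_membership_if_acc_prob_close:
  "\<bar>acc_prob A x - acc_prob A x'\<bar> < 2 * \<delta> \<Longrightarrow> x \<in> L \<longleftrightarrow> x' \<in> L"
  using mem_iff[of x] mem_iff[of x'] gap[of x] gap[of x'] by (auto simp: abs_if split: if_splits)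

definition tol :: real where
  "tol = (\<delta> / (entry_norm_sum N acc_obs + entry_norm_sum N (init_state A) + 1))\<^sup>2"

lemma tol_pos: "tol > 0"
proof -
  have "entry_norm_sum N acc_obs + entry_norm_sum N (init_state A) + 1 > 0"
    using entry_norm_sum_nonneg[of N acc_obs] entry_norm_sum_nonneg[of N "init_state A"] by linarith
  then show ?thesis
    unfolding tol_def using gap_pos by simp
qed

lemma mult_sqrt_frob_sq_less_gap:
  assumes "0 \<le> C" "C \<le> entry_norm_sum N acc_obs + entry_norm_sum N (init_state A)"
    and "frob_sq N X < tol"
  shows "C * sqrt (frob_sq N X) < \<delta>"
proof -
  define S where "S = entry_norm_sum N acc_obs + entry_norm_sum N (init_state A) + 1"
  have S: "S > 0"
    unfolding S_def using entry_norm_sum_nonneg[of N acc_obs] entry_norm_sum_nonneg[of N "init_state A"]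
    by linarith
  have "sqrt (frob_sq N X) < \<delta> / S"
    using real_sqrt_less_mono[OF assms(3)] gap_pos S by (simp add: tol_def S_def)
  then have "C * sqrt (frob_sq N X) \<le> C * (\<delta> / S)"
    using assms(1) by (intro mult_left_mono) auto
  also have "\<dots> < \<delta>"
  proof -
    have "C * \<delta> < S * \<delta>"
      using assms(2) gap_pos unfolding S_def by (intro mult_strict_right_mono) auto
    then show ?thesis
      using S by (simp add: field_simps)
  qed
  finally show ?thesis .
qed

lemma same_membership_if_states_close:
  assumes "frob_sq N (run (init_state A) x - run (init_state A) x') < tol"
  shows "x \<in> L \<longleftrightarrow> x' \<in> L"
proof (rule same_membership_if_acc_prob_close)
  let ?D = "run (init_state A) x - run (init_state A) x'"
  have "acc_prob A x - acc_prob A x' = Re (frob_inner N acc_obs ?D)"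
    by (simp add: acc_prob_eq_frob_inner frob_inner_diff_right)
  then have "\<bar>acc_prob A x - acc_prob A x'\<bar> \<le> cmod (frob_inner N acc_obs ?D)"
    by (simp add: abs_Re_le_cmod)
  also have "\<dots> \<le> entry_norm_sum N acc_obs * sqrt (frob_sq N ?D)"
    by (rule norm_frob_inner_le)
  also have "\<dots> < \<delta>"
    using assms entry_norm_sum_nonneg[of N] by (intro mult_sqrt_frob_sq_less_gap) auto
  finally show "\<bar>acc_prob A x - acc_prob A x'\<bar> < 2 * \<delta>" using gap_pos by simp
qed

lemma same_membership_if_dual_states_close:
  assumes "frob_sq N (run acc_obs (rev x) - run acc_obs (rev x')) < tol"
  shows "x \<in> L \<longleftrightarrow> x' \<in> L"
proof (rule same_membership_if_acc_prob_close)
  let ?D = "run acc_obs (rev x) - run acc_obs (rev x')"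
  have "acc_prob A x - acc_prob A x' = Re (frob_inner N ?D (init_state A))"
    by (simp add: acc_prob_eq_frob_inner_rev frob_inner_diff_left)
  then have "\<bar>acc_prob A x - acc_prob A x'\<bar> \<le> cmod (frob_inner N ?D (init_state A))"
    by (simp add: abs_Re_le_cmod)
  also have "\<dots> \<le> entry_norm_sum N (init_state A) * sqrt (frob_sq N ?D)"
    using norm_frob_inner_le' by (simp add: mult.commute)
  also have "\<dots> < \<delta>"
    using assms entry_norm_sum_nonneg[of N] by (intro mult_sqrt_frob_sq_less_gap) auto
  finally show "\<bar>acc_prob A x - acc_prob A x'\<bar> < 2 * \<delta>" using gap_pos by simp
qed

lemma right_power_absorbing: "right_power_absorbing L"
  unfolding right_power_absorbing_def
proof (intro allI impI)
  fix u s W v :: "'a list" assume "set s \<subseteq> set W"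
  then obtain m where m: "frob_sq N (run (run (run (init_state A) u) (word_pow W m)) s
                                    - run (run (init_state A) u) (word_pow W m)) < tol"
    using exists_word_pow_almost_fixed tol_pos init_state_carrier run_carrier by blast
  define z where "z = run (run (init_state A) u) (word_pow W m)"
  have z: "z \<in> carrier_mat N N" unfolding z_def by simp
  have "frob_sq N (run (init_state A) (u @ word_pow W m @ s @ v) - run (init_state A) (u @ word_pow W m @ v))
        = frob_sq N (run (run z s - z) v)"
    using z by (simp add: z_def run_append run_diff)
  also have "\<dots> \<le> frob_sq N (run z s - z)"
    using z by (simp add: frob_sq_run_le)
  also have "\<dots> < tol"
    using m by (simp add: z_def)
  finally show "\<exists>m. u @ word_pow W m @ s @ v \<in> L \<longleftrightarrow> u @ word_pow W m @ v \<in> L"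
    using same_membership_if_states_close by blast
qed

lemma left_power_absorbing: "left_power_absorbing L"
  unfolding left_power_absorbing_def
proof (intro allI impI)
  fix u s W v :: "'a list" assume "set s \<subseteq> set W"
  then have "set (rev s) \<subseteq> set (rev W)" by simp
  then obtain m where m: "frob_sq N (run (run (run acc_obs (rev v)) (word_pow (rev W) m)) (rev s)
                                    - run (run acc_obs (rev v)) (word_pow (rev W) m)) < tol"
    using exists_word_pow_almost_fixed tol_pos acc_obs_carrier run_carrier by blast
  define z where "z = run (run acc_obs (rev v)) (word_pow (rev W) m)"
  have z: "z \<in> carrier_mat N N" unfolding z_def by simp
  have "frob_sq N (run acc_obs (rev (u @ s @ word_pow W m @ v)) - run acc_obs (rev (u @ word_pow W m @ v)))
        = frob_sq N (run (run z (rev s) - z) (rev u))"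
    using z by (simp add: z_def run_append run_diff rev_word_pow)
  also have "\<dots> \<le> frob_sq N (run z (rev s) - z)"
    using z by (simp add: frob_sq_run_le)
  also have "\<dots> < tol"
    using m by (simp add: z_def)
  finally show "\<exists>m. u @ s @ word_pow W m @ v \<in> L \<longleftrightarrow> u @ word_pow W m @ v \<in> L"
    using same_membership_if_dual_states_close by blast
qed

definition cell_transitions ::
    "real \<Rightarrow> 'a list \<Rightarrow> ((nat \<times> nat \<Rightarrow> int \<times> int) \<times> (nat \<times> nat \<Rightarrow> int \<times> int)) set" where
  "cell_transitions h w =
     {(grid_cell h N (run (init_state A) x), grid_cell h N (run (init_state A) (x @ w))) | x. True}"

lemma same_membership_if_same_grid_cell:
  assumes h: "h > 0" "2 * h\<^sup>2 * (real N)\<^sup>2 < tol"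
    and cell: "grid_cell h N (run (init_state A) u) = grid_cell h N (run (init_state A) u')"
  shows "u @ y \<in> L \<longleftrightarrow> u' @ y \<in> L"
proof (rule same_membership_if_states_close)
  let ?X = "run (init_state A) u" and ?X' = "run (init_state A) u'"
  have "frob_sq N (run (init_state A) (u @ y) - run (init_state A) (u' @ y)) = frob_sq N (run (?X - ?X') y)"
    by (simp add: run_append run_diff)
  also have "\<dots> \<le> frob_sq N (?X - ?X')"
    by (simp add: frob_sq_run_le)
  also have "\<dots> \<le> 2 * h\<^sup>2 * (real N)\<^sup>2"
    using h(1) cell by (intro frob_sq_diff_le_if_same_grid_cell) auto
  finally show "frob_sq N (run (init_state A) (u @ y) - run (init_state A) (u' @ y)) < tol"
    using h(2) by linarith
qed

lemma syn_equiv_if_same_cell_transitions: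
  assumes h: "h > 0" "2 * h\<^sup>2 * (real N)\<^sup>2 < tol"
    and same: "cell_transitions h w = cell_transitions h w'"
  shows "syn_equiv L w w'"
  unfolding syn_equiv_def
proof (intro allI)
  fix x y
  have "(grid_cell h N (run (init_state A) x), grid_cell h N (run (init_state A) (x @ w))) \<in> cell_transitions h w'"
    using same unfolding cell_transitions_def by blast
  then obtain x' where
    "grid_cell h N (run (init_state A) x') = grid_cell h N (run (init_state A) x)"
    "grid_cell h N (run (init_state A) (x' @ w')) = grid_cell h N (run (init_state A) (x @ w))"
    unfolding cell_transitions_def by auto
  from this[THEN same_membership_if_same_grid_cell[OF h]]
  show "x @ w @ y \<in> L \<longleftrightarrow> x @ w' @ y \<in> L"
    by (metis append.assoc)
qed

lemma finite_syntactic_monoid: "finite (carrier (syntactic_monoid L))"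
proof -
  obtain h where h: "h > 0" "2 * h\<^sup>2 * (real N)\<^sup>2 < tol"
    using exists_grid_width[OF tol_pos, of "(real N)\<^sup>2"] by auto
  define G where "G = grid_cell h N ` {X. frob_sq N X \<le> frob_sq N (init_state A)}"
  have "grid_cell h N (run (init_state A) x) \<in> G" for x
    unfolding G_def by (intro imageI) (simp add: frob_sq_run_le)
  then have "range (cell_transitions h) \<subseteq> Pow (G \<times> G)"
    unfolding cell_transitions_def by auto
  moreover have "finite G"
    unfolding G_def by (rule finite_grid_cells_of_bounded[OF h(1)])
  ultimately have "finite (range (cell_transitions h))"
    by (meson finite_Pow_iff finite_SigmaI finite_subset)
  then show ?thesis
    unfolding carrier_syntactic_monoid
    by (rule finite_range_if_factors_through)
       (simp add: syn_class_eq_iff syn_equiv_if_same_cell_transitions[OF h])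
qed

end

theorem theorem3:
  fixes L :: "('a::finite) list set"
  assumes "L \<in> LMO"
  shows "block_group (syntactic_monoid L) \<and> R_trivial (syntactic_monoid L)"
proof -
  obtain A :: "'a mon1qfa" and cut \<delta> where "wf_mon1qfa A"
    and "\<forall>x. x \<in> L \<longleftrightarrow> acc_prob A x > cut" "\<delta> > 0" "\<forall>x. \<bar>acc_prob A x - cut\<bar> \<ge> \<delta>"
    using assms unfolding LMO_def recognizes_isolated_def by blast
  then interpret isolated_cut_point A L cut \<delta>
    by unfold_locales simp_all
  have "R_trivial (syntactic_monoid L)"
    using finite_syntactic_monoid right_power_absorbing by (rule R_trivial_syntactic_monoid)
  then show ?thesis
    using block_group_syntactic_monoid left_power_absorbing by blast
qed

end
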